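(* Let $\mathbb{X}\subseteq\mathbb{R}^{d_{\mathbb{X}}}$ and $\tilde{\mathbb{X}}\subseteq\mathbb{R}^{d_{\mathbb{X}}}$, let $p(x)$ be a probability distribution on $\mathbb{X}$ and $p(\tilde x\mid x)$ a conditional distribution on $\tilde{\mathbb{X}}$ (the distribution of augmentations $\tilde x$ of $x$). Let $f_\theta:\mathbb{X}\to\mathbb{R}^{d_{\mathbb{Z}}}$ (encoder; it is also applied to augmentations $\tilde x$), $h_\psi:\mathbb{R}^{d_{\mathbb{Z}}}\to\mathbb{R}^{d_{\mathbb{Z}}}$ (aligner) and a continuously differentiable $g_\phi:\mathbb{R}^{d_{\mathbb{Z}}}\to\mathbb{R}^{d_{\mathbb{X}}}$ (decoder). Define $$\mathcal{L}_{\mathrm{RC}}=\mathbb{E}_{p(x)}\mathbb{E}_{p(\tilde x|x)}\|g_\phi(h_\psi(f_\theta(\tilde x)))-x\|_2,\qquad \mathcal{L}_{\mathrm{CL}}=\mathbb{E}_{p(x)}\mathbb{E}_{p(\tilde x|x)}\|h_\psi(f_\theta(\tilde x))-f_\theta(x)\|_2,$$ $$\mathcal{L}_{\mathrm{reg}}=\mathbb{E}_{p(x)}\|g_\phi(f_\theta(x))-x\|_2 .$$ Let $\lambda_{\max}$ and $\lambda_{\min}$ be the constants defined in the context below. If $\lambda_{\max}$ and $\lambda_{\min}$ are non-zero, then (1) $\mathcal{L}_{\mathrm{CL}}+\frac{1}{\lambda_{\max}}\mathcal{L}_{\mathrm{reg}}\ \ge\ \frac{1}{\lambda_{\max}}\mathcal{L}_{\mathrm{RC}}$,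 and (2) $\mathcal{L}_{\mathrm{RC}}+\mathcal{L}_{\mathrm{reg}}\ \ge\ \lambda_{\min}\,\mathcal{L}_{\mathrm{CL}}$.
   Context: $\|\cdot\|_2$ is the Euclidean norm; all expectations are assumed finite. (In the paper a stop-gradient operator is applied to $f_\theta(x)$ in $\mathcal{L}_{\mathrm{CL}}$ and $\mathcal{L}_{\mathrm{reg}}$; it does not change the values of the losses.) Definition of $\lambda_{\max},\lambda_{\min}$: for each pair $(x,\tilde x)$ set $a=f_\theta(x)$, $b=h_\psi(f_\theta(\tilde x))$. Writing $g_{\phi,j}$ for the $j$-th coordinate of $g_\phi$, by the mean value theorem for each $j=1,\dots,d_{\mathbb{X}}$ choose a point $\xi_j$ on the segment between $a$ and $b$ with $g_{\phi,j}(a)-g_{\phi,j}(b)=\nabla g_{\phi,j}(\xi_j)^\top(a-b)$, and let $G(x,\tilde x)\in\mathbb{R}^{d_{\mathbb{X}}\times d_{\mathbb{Z}}}$ be the matrix whose $j$-th row is $\nabla g_{\phi,j}(\xi_j)^\top$. Let $\hat\lambda_{\max}(x,\tilde x)^2$ and $\hat\lambda_{\min}(x,\tilde x)^2$ be the largest and smallest eigenvalues of $G(x,\tilde x)^\top G(x,\tilde x)$, with $\hat\lambda_{\max},\hat\lambda_{\min}\ge 0$. Then $\lambda_{\max}=\sup_{x,\tilde x}\hat\lambda_{\max}(x,\tilde x)$ and $\lambda_{\min}=\inf_{x,\tilde x}\hat\lambda_{\min}(x,\tilde x)$. *)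

theory Defs
  imports "HOL-Analysis.Analysis" "HOL-Probability.Probability"
begin

definition mat_eigenvalue :: "real^'n^'n \<Rightarrow> real \<Rightarrow> bool" where
  "mat_eigenvalue A \<mu> \<longleftrightarrow> (\<exists>v. v \<noteq> 0 \<and> A *v v = \<mu> *\<^sub>R v)"

definition max_eigenvalue :: "real^'n^'n \<Rightarrow> real" where
  "max_eigenvalue A = Max {\<mu>. mat_eigenvalue A \<mu>}"

definition min_eigenvalue :: "real^'n^'n \<Rightarrow> real" where
  "min_eigenvalue A = Min {\<mu>. mat_eigenvalue A \<mu>}"

text \<open>The matrix G(x, xt): its j-th row is the gradient of the j-th coordinate of g
  at the mean-value point xi x xt j.\<close>
definition mvt_matrix ::
  "(real^'z \<Rightarrow> real^'x) \<Rightarrow> (real^'x \<Rightarrow> real^'x \<Rightarrow> 'x \<Rightarrow> real^'z)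
     \<Rightarrow> real^'x \<Rightarrow> real^'x \<Rightarrow> real^'z^'x" where
  "mvt_matrix g \<xi> x xt = (\<chi> j. jacobian g (at (\<xi> x xt j)) $ j)"

definition lam_hat_max where
  "lam_hat_max g \<xi> x xt =
     sqrt (max_eigenvalue (transpose (mvt_matrix g \<xi> x xt) ** mvt_matrix g \<xi> x xt))"

definition lam_hat_min where
  "lam_hat_min g \<xi> x xt =
     sqrt (min_eigenvalue (transpose (mvt_matrix g \<xi> x xt) ** mvt_matrix g \<xi> x xt))"

end

(* On each pair (x, xt) the mean-value matrix G turns g (f x) - g (h (f xt)) into
   G (f x - h (f xt)), and the Rayleigh quotient of the symmetric matrix G^T G squeezes
   |G u| between lam_hat_min |u| and lam_hat_max |u|.  With the triangle inequality through x
   this bounds the reconstruction error of xt by lam_max times the alignment error plus the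
   reconstruction error of x, and the alignment error (times lam_min) by the sum of the two
   reconstruction errors; integrating over the kernel and then over p(x) gives (1) and (2). *)

theory Submission
  imports Defs
begin

lemma inner_matrix_vector_symmetric:
  fixes A :: "real^'n^'n"
  assumes "transpose A = A"
  shows "u \<bullet> (A *v w) = (A *v u) \<bullet> w"
  by (metis assms dot_lmul_matrix transpose_matrix_vector)

text \<open>Expanding \<open>0 \<le> (v - s F v) \<bullet> F (v - s F v)\<close> gives a quadratic in \<open>s\<close> without
  constant term and with linear coefficient \<open>-2 |F v|\<^sup>2\<close>, which forces \<open>F v = 0\<close>.\<close>

lemma selfadjoint_psd_kernel:
  fixes F :: "'a::real_inner \<Rightarrow> 'a"
  assumes lin: "linear F" and sym: "\<And>u w. u \<bullet> F w = F u \<bullet> w"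
    and psd: "\<And>u. 0 \<le> u \<bullet> F u" and v: "v \<bullet> F v = 0"
  shows "F v = 0"
proof -
  define w where "w = F v"
  define c where "c = w \<bullet> F w"
  have quadratic: "0 \<le> s\<^sup>2 * c - 2 * s * (w \<bullet> w)" for s
  proof -
    have "(v - s *\<^sub>R w) \<bullet> F (v - s *\<^sub>R w) = s\<^sup>2 * c - 2 * s * (w \<bullet> w)"
      using v sym[of v w]
      by (simp add: linear_diff[OF lin] linear_scale[OF lin] inner_diff_left inner_diff_right
          inner_commute w_def c_def power2_eq_square)
    then show ?thesis using psd[of "v - s *\<^sub>R w"] by simp
  qed
  have "w \<bullet> w \<le> 0"
  proof (cases "c = 0")
    case True
    then show ?thesis using quadratic[of 1] by simp
  next
    case False
    then have "c > 0" using psd[of w] by (simp add: c_def)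
    have "0 \<le> ((w \<bullet> w) / c)\<^sup>2 * c - 2 * ((w \<bullet> w) / c) * (w \<bullet> w)"
      by (rule quadratic)
    also have "\<dots> = - (w \<bullet> w)\<^sup>2 / c"
      using \<open>c > 0\<close> by (simp add: field_simps power2_eq_square)
    finally show ?thesis using \<open>c > 0\<close> by (simp add: divide_le_0_iff)
  qed
  then have "w \<bullet> w = 0" using inner_ge_zero[of w] by linarith
  then show ?thesis by (simp add: w_def)
qed

lemma inner_matrix_vector_scaleR:
  fixes A :: "real^'n^'n"
  shows "(c *\<^sub>R u) \<bullet> (A *v (c *\<^sub>R u)) = c\<^sup>2 * (u \<bullet> (A *v u))"
  by (simp add: matrix_vector_mult_scaleR power2_eq_square)

text \<open>The maximiser \<open>v\<close> of the Rayleigh quotient on the unit sphere is a null vector of the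
  positive semidefinite form of \<open>m I - A\<close>, hence an eigenvector for the maximum \<open>m\<close>.\<close>

lemma symmetric_matrix_max_rayleigh_eigenvalue:
  fixes A :: "real^'n^'n"
  assumes sym: "transpose A = A"
  obtains m where "mat_eigenvalue A m" "\<And>u. u \<bullet> (A *v u) \<le> m * (norm u)\<^sup>2"
proof -
  let ?q = "\<lambda>u. u \<bullet> (A *v u)"
  have "continuous_on (sphere 0 1) ?q"
    by (intro continuous_intros linear_continuous_on matrix_vector_mul_bounded_linear)
  from continuous_attains_sup[OF compact_sphere _ this] obtain v
    where v: "v \<in> sphere 0 1" and v_max: "\<And>y. y \<in> sphere 0 1 \<Longrightarrow> ?q y \<le> ?q v"
    by auto
  define m where "m = ?q v"
  have rayleigh: "?q u \<le> m * (norm u)\<^sup>2" for u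
  proof (cases "u = 0")
    case False
    have "?q u = (norm u)\<^sup>2 * ?q (u /\<^sub>R norm u)"
      using inner_matrix_vector_scaleR[of "norm u" "u /\<^sub>R norm u" A] False by simp
    also have "\<dots> \<le> (norm u)\<^sup>2 * m"
      using v_max[of "u /\<^sub>R norm u"] False by (intro mult_left_mono) (simp_all add: m_def)
    finally show ?thesis
      by (simp add: ac_simps)
  qed simp
  define F where "F = (\<lambda>u. m *\<^sub>R u - A *v u)"
  have "F v = 0"
  proof (rule selfadjoint_psd_kernel[where F = F])
    show "linear F"
      unfolding F_def linear_iff
      by (simp add: algebra_simps)
    show "u \<bullet> F w = F u \<bullet> w" for u w
      using inner_matrix_vector_symmetric[OF sym, of u w]
      by (simp add: F_def inner_diff_left inner_diff_right inner_commute)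
    show "0 \<le> u \<bullet> F u" for u
      using rayleigh[of u] by (simp add: F_def inner_diff_right power2_norm_eq_inner)
    show "v \<bullet> F v = 0"
      using v by (simp add: F_def inner_diff_right m_def norm_eq_1)
  qed
  then have "A *v v = m *\<^sub>R v"
    by (simp add: F_def)
  with v have "mat_eigenvalue A m"
    unfolding mat_eigenvalue_def by (intro exI[of _ v]) auto
  then show thesis
    using rayleigh by (rule that)
qed

lemma matrix_vector_mult_uminus:
  fixes A :: "'a::ring_1^'n^'m"
  shows "(- A) *v v = - (A *v v)"
  by (simp add: vec_eq_iff matrix_vector_mult_def sum_negf)

lemma mat_eigenvalue_uminus: "mat_eigenvalue (- A) \<mu> \<longleftrightarrow> mat_eigenvalue A (- \<mu>)"
proof -
  have "(- A) *v v = \<mu> *\<^sub>R v \<longleftrightarrow> A *v v = (- \<mu>) *\<^sub>R v" for v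
    by (metis matrix_vector_mult_uminus minus_minus scaleR_minus_left)
  then show ?thesis
    unfolding mat_eigenvalue_def by simp
qed

lemma symmetric_matrix_min_rayleigh_eigenvalue:
  fixes A :: "real^'n^'n"
  assumes sym: "transpose A = A"
  obtains m where "mat_eigenvalue A m" "\<And>u. m * (norm u)\<^sup>2 \<le> u \<bullet> (A *v u)"
proof -
  have "transpose (- A) = - A"
    using sym by (simp add: vec_eq_iff transpose_def)
  then obtain m where m: "mat_eigenvalue (- A) m" "\<And>u. u \<bullet> ((- A) *v u) \<le> m * (norm u)\<^sup>2"
    by (rule symmetric_matrix_max_rayleigh_eigenvalue) blast
  have "- m * (norm u)\<^sup>2 \<le> u \<bullet> (A *v u)" for u
    using m(2)[of u] by (simp add: matrix_vector_mult_uminus)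
  moreover have "mat_eigenvalue A (- m)"
    using m(1) by (simp add: mat_eigenvalue_uminus)
  ultimately show thesis
    using that by blast
qed

lemma finite_eigenvalues_symmetric:
  fixes A :: "real^'n^'n"
  assumes sym: "transpose A = A"
  shows "finite {\<mu>. mat_eigenvalue A \<mu>}"
proof -
  define E where "E = {\<mu>. mat_eigenvalue A \<mu>}"
  have "\<forall>\<mu>\<in>E. \<exists>v. v \<noteq> 0 \<and> A *v v = \<mu> *\<^sub>R v"
    unfolding E_def mat_eigenvalue_def by simp
  from bchoice[OF this] obtain e
    where e: "\<forall>\<mu>\<in>E. e \<mu> \<noteq> 0 \<and> A *v e \<mu> = \<mu> *\<^sub>R e \<mu>" ..
  have orthogonal: "e \<mu> \<bullet> e \<nu> = 0" if "\<mu> \<in> E" "\<nu> \<in> E" "\<mu> \<noteq> \<nu>" for \<mu> \<nu>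
  proof -
    have "\<nu> * (e \<mu> \<bullet> e \<nu>) = \<mu> * (e \<mu> \<bullet> e \<nu>)"
      using inner_matrix_vector_symmetric[OF sym, of "e \<mu>" "e \<nu>"] e that by simp
    then show ?thesis using that by simp
  qed
  have "inj_on e E"
  proof (rule inj_onI)
    fix \<mu> \<nu> assume "\<mu> \<in> E" "\<nu> \<in> E" "e \<mu> = e \<nu>"
    then show "\<mu> = \<nu>" using orthogonal[of \<mu> \<nu>] e by auto
  qed
  moreover have "independent (e ` E)"
    using orthogonal e
    by (intro pairwise_orthogonal_independent) (auto simp: pairwise_def orthogonal_def)
  ultimately show ?thesis
    unfolding E_def[symmetric] using independent_imp_finite finite_imageD by blast
qed

lemma
  fixes A :: "real^'n^'n"
  assumes sym: "transpose A = A"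
  shows mat_eigenvalue_max_eigenvalue: "mat_eigenvalue A (max_eigenvalue A)"
    and mat_eigenvalue_min_eigenvalue: "mat_eigenvalue A (min_eigenvalue A)"
    and inner_le_max_eigenvalue: "u \<bullet> (A *v u) \<le> max_eigenvalue A * (norm u)\<^sup>2"
    and min_eigenvalue_le_inner: "min_eigenvalue A * (norm u)\<^sup>2 \<le> u \<bullet> (A *v u)"
proof -
  define E where "E = {\<mu>. mat_eigenvalue A \<mu>}"
  have fin: "finite E"
    unfolding E_def using sym by (rule finite_eigenvalues_symmetric)
  obtain m where m: "m \<in> E" "\<And>u. u \<bullet> (A *v u) \<le> m * (norm u)\<^sup>2"
    using symmetric_matrix_max_rayleigh_eigenvalue[OF sym] unfolding E_def by blast
  obtain m' where m': "m' \<in> E" "\<And>u. m' * (norm u)\<^sup>2 \<le> u \<bullet> (A *v u)"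
    using symmetric_matrix_min_rayleigh_eigenvalue[OF sym] unfolding E_def by blast
  have "E \<noteq> {}"
    using m(1) by auto
  then have "Max E \<in> E" "Min E \<in> E"
    using fin by (simp_all add: Max_in Min_in)
  then show "mat_eigenvalue A (max_eigenvalue A)" "mat_eigenvalue A (min_eigenvalue A)"
    unfolding max_eigenvalue_def min_eigenvalue_def E_def by auto
  have "m * (norm u)\<^sup>2 \<le> Max E * (norm u)\<^sup>2"
    using fin m(1) by (intro mult_right_mono) auto
  with m(2)[of u] show "u \<bullet> (A *v u) \<le> max_eigenvalue A * (norm u)\<^sup>2"
    unfolding max_eigenvalue_def E_def[symmetric] by linarith
  have "Min E * (norm u)\<^sup>2 \<le> m' * (norm u)\<^sup>2"
    using fin m'(1) by (intro mult_right_mono) auto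
  with m'(2)[of u] show "min_eigenvalue A * (norm u)\<^sup>2 \<le> u \<bullet> (A *v u)"
    unfolding min_eigenvalue_def E_def[symmetric] by linarith
qed

lemma transpose_gram_matrix:
  fixes G :: "real^'n^'m"
  shows "transpose (transpose G ** G) = transpose G ** G"
  by (simp add: matrix_transpose_mul)

lemma inner_gram_matrix:
  fixes G :: "real^'n^'m"
  shows "u \<bullet> ((transpose G ** G) *v u) = (norm (G *v u))\<^sup>2"
proof -
  have "u \<bullet> ((transpose G ** G) *v u) = ((G *v u) v* G) \<bullet> u"
    by (simp add: matrix_vector_mul_assoc[symmetric] transpose_matrix_vector inner_commute)
  also have "\<dots> = (G *v u) \<bullet> (G *v u)"
    by (rule dot_lmul_matrix)
  finally show ?thesis
    by (simp add: power2_norm_eq_inner)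
qed

lemma mat_eigenvalue_gram_nonneg:
  fixes G :: "real^'n^'m"
  assumes "mat_eigenvalue (transpose G ** G) \<mu>"
  shows "0 \<le> \<mu>"
proof -
  obtain v where v: "v \<noteq> 0" "(transpose G ** G) *v v = \<mu> *\<^sub>R v"
    using assms unfolding mat_eigenvalue_def by blast
  then have "0 \<le> \<mu> * (norm v)\<^sup>2"
    using inner_gram_matrix[of v G] by (simp add: power2_norm_eq_inner)
  moreover have "0 < (norm v)\<^sup>2"
    using v(1) by simp
  ultimately show ?thesis
    by (simp add: zero_le_mult_iff)
qed

lemma
  fixes G :: "real^'n^'m"
  shows min_eigenvalue_gram_nonneg: "0 \<le> min_eigenvalue (transpose G ** G)"
    and max_eigenvalue_gram_nonneg: "0 \<le> max_eigenvalue (transpose G ** G)"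
  by (rule mat_eigenvalue_gram_nonneg,
      rule mat_eigenvalue_min_eigenvalue mat_eigenvalue_max_eigenvalue, rule transpose_gram_matrix)+

lemma norm_matrix_vector_le_sqrt_max_eigenvalue:
  fixes G :: "real^'n^'m"
  shows "norm (G *v u) \<le> sqrt (max_eigenvalue (transpose G ** G)) * norm u"
proof -
  have "(norm (G *v u))\<^sup>2 \<le> max_eigenvalue (transpose G ** G) * (norm u)\<^sup>2"
    using inner_le_max_eigenvalue[OF transpose_gram_matrix] by (simp add: inner_gram_matrix)
  then have "sqrt ((norm (G *v u))\<^sup>2) \<le> sqrt (max_eigenvalue (transpose G ** G) * (norm u)\<^sup>2)"
    by (rule real_sqrt_le_mono)
  then show ?thesis
    by (simp add: real_sqrt_mult)
qed

lemma sqrt_min_eigenvalue_le_norm_matrix_vector: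
  fixes G :: "real^'n^'m"
  shows "sqrt (min_eigenvalue (transpose G ** G)) * norm u \<le> norm (G *v u)"
proof -
  have "min_eigenvalue (transpose G ** G) * (norm u)\<^sup>2 \<le> (norm (G *v u))\<^sup>2"
    using min_eigenvalue_le_inner[OF transpose_gram_matrix] by (simp add: inner_gram_matrix)
  then have "sqrt (min_eigenvalue (transpose G ** G) * (norm u)\<^sup>2) \<le> sqrt ((norm (G *v u))\<^sup>2)"
    by (rule real_sqrt_le_mono)
  then show ?thesis
    by (simp add: real_sqrt_mult)
qed

lemma mvt_matrix_mult:
  assumes "\<And>j. g a $ j - g b $ j = (jacobian g (at (\<xi> x xt j)) $ j) \<bullet> (a - b)"
  shows "g a - g b = mvt_matrix g \<xi> x xt *v (a - b)"
  using assms by (simp add: vec_eq_iff matrix_vector_mul_component mvt_matrix_def)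

lemma
  assumes "\<And>j. g a $ j - g b $ j = (jacobian g (at (\<xi> x xt j)) $ j) \<bullet> (a - b)"
  shows norm_diff_le_lam_hat_max: "norm (g a - g b) \<le> lam_hat_max g \<xi> x xt * norm (a - b)"
    and lam_hat_min_le_norm_diff: "lam_hat_min g \<xi> x xt * norm (a - b) \<le> norm (g a - g b)"
  unfolding mvt_matrix_mult[where \<xi> = \<xi> and x = x and xt = xt, OF assms]
    lam_hat_max_def lam_hat_min_def
  by (rule norm_matrix_vector_le_sqrt_max_eigenvalue sqrt_min_eigenvalue_le_norm_matrix_vector)+

lemma
  shows lam_hat_max_nonneg: "0 \<le> lam_hat_max g \<xi> x xt"
    and lam_hat_min_nonneg: "0 \<le> lam_hat_min g \<xi> x xt"
  unfolding lam_hat_max_def lam_hat_min_def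
  by (simp_all add: max_eigenvalue_gram_nonneg min_eigenvalue_gram_nonneg)

lemma nested_integral_affine_mono:
  fixes \<phi> \<psi> :: "'a \<Rightarrow> 'b \<Rightarrow> real"
  assumes K: "\<And>x. x \<in> space M \<Longrightarrow> prob_space (K x)"
    and le: "\<And>x y. x \<in> space M \<Longrightarrow> y \<in> space (K x) \<Longrightarrow> a * \<phi> x y \<le> b * \<psi> x y + \<rho> x"
    and int_\<phi>: "\<And>x. x \<in> space M \<Longrightarrow> integrable (K x) (\<phi> x)"
      "integrable M (\<lambda>x. \<integral>y. \<phi> x y \<partial>K x)"
    and int_\<psi>: "\<And>x. x \<in> space M \<Longrightarrow> integrable (K x) (\<psi> x)"
      "integrable M (\<lambda>x. \<integral>y. \<psi> x y \<partial>K x)"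
    and int_\<rho>: "integrable M \<rho>"
  shows "a * (\<integral>x. \<integral>y. \<phi> x y \<partial>K x \<partial>M) \<le> b * (\<integral>x. \<integral>y. \<psi> x y \<partial>K x \<partial>M) + (\<integral>x. \<rho> x \<partial>M)"
proof -
  have inner: "a * (\<integral>y. \<phi> x y \<partial>K x) \<le> b * (\<integral>y. \<psi> x y \<partial>K x) + \<rho> x" if x: "x \<in> space M" for x
  proof -
    interpret prob_space "K x"
      using K[OF x] .
    have "a * (\<integral>y. \<phi> x y \<partial>K x) = (\<integral>y. a * \<phi> x y \<partial>K x)"
      by simp
    also have "\<dots> \<le> (\<integral>y. b * \<psi> x y + \<rho> x \<partial>K x)"
      using le[OF x] int_\<phi>(1)[OF x] int_\<psi>(1)[OF x] by (intro integral_mono) auto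
    also have "\<dots> = b * (\<integral>y. \<psi> x y \<partial>K x) + \<rho> x"
      using int_\<psi>(1)[OF x] prob_space by simp
    finally show ?thesis .
  qed
  have "a * (\<integral>x. \<integral>y. \<phi> x y \<partial>K x \<partial>M) = (\<integral>x. a * (\<integral>y. \<phi> x y \<partial>K x) \<partial>M)"
    by simp
  also have "\<dots> \<le> (\<integral>x. b * (\<integral>y. \<psi> x y \<partial>K x) + \<rho> x \<partial>M)"
    using inner int_\<phi>(2) int_\<psi>(2) int_\<rho> by (intro integral_mono) auto
  also have "\<dots> = b * (\<integral>x. \<integral>y. \<psi> x y \<partial>K x \<partial>M) + (\<integral>x. \<rho> x \<partial>M)"
    using int_\<psi>(2) int_\<rho> by simp
  finally show ?thesis .
qed

lemma norm_diff_le_lam_hat_max_triangle: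
  assumes "\<And>j. g a $ j - g b $ j = (jacobian g (at (\<xi> x xt j)) $ j) \<bullet> (a - b)"
    and "lam_hat_max g \<xi> x xt \<le> L"
  shows "norm (g b - y) \<le> L * norm (b - a) + norm (g a - y)"
proof -
  have "norm (g b - y) \<le> norm (g a - g b) + norm (g a - y)"
    by (metis norm_diff_triangle_le norm_minus_commute order_refl)
  also have "\<dots> \<le> L * norm (b - a) + norm (g a - y)"
    using norm_diff_le_lam_hat_max[of g a b \<xi> x xt, OF assms(1)] assms(2)
    by (smt (verit) mult_right_mono norm_ge_zero norm_minus_commute)
  finally show ?thesis .
qed

lemma lam_hat_min_le_norm_diff_triangle:
  assumes "\<And>j. g a $ j - g b $ j = (jacobian g (at (\<xi> x xt j)) $ j) \<bullet> (a - b)"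
    and "l \<le> lam_hat_min g \<xi> x xt"
  shows "l * norm (b - a) \<le> norm (g b - y) + norm (g a - y)"
proof -
  have "l * norm (b - a) \<le> norm (g a - g b)"
    using lam_hat_min_le_norm_diff[of g a b \<xi> x xt, OF assms(1)] assms(2)
    by (smt (verit) mult_right_mono norm_ge_zero norm_minus_commute)
  also have "\<dots> \<le> norm (g b - y) + norm (g a - y)"
    by (metis norm_diff_triangle_le norm_minus_commute order_refl)
  finally show ?thesis .
qed

lemma lam_hat_max_le_SUP:
  assumes "bdd_above {lam_hat_max g \<xi> x xt | x xt. x \<in> X \<and> xt \<in> Xt}" "x \<in> X" "xt \<in> Xt"
  shows "lam_hat_max g \<xi> x xt \<le> (SUP p \<in> X \<times> Xt. lam_hat_max g \<xi> (fst p) (snd p))"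
proof -
  have "bdd_above ((\<lambda>p. lam_hat_max g \<xi> (fst p) (snd p)) ` (X \<times> Xt))"
    using assms(1) by (rule bdd_above_mono) fastforce
  then show ?thesis
    using assms(2,3) by (intro cSUP_upper2[of _ _ "(x, xt)"]) auto
qed

lemma INF_le_lam_hat_min:
  assumes "x \<in> X" "xt \<in> Xt"
  shows "(INF p \<in> X \<times> Xt. lam_hat_min g \<xi> (fst p) (snd p)) \<le> lam_hat_min g \<xi> x xt"
proof -
  have "bdd_below ((\<lambda>p. lam_hat_min g \<xi> (fst p) (snd p)) ` (X \<times> Xt))"
    by (rule bdd_belowI[of _ 0]) (auto simp: lam_hat_min_nonneg)
  then show ?thesis
    using assms by (intro cINF_lower2[of _ _ "(x, xt)"]) auto
qed

theorem theorem1: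
  fixes M :: "(real^'x) measure"               \<comment> \<open>p(x), on X = space M\<close>
    and K :: "real^'x \<Rightarrow> (real^'x) measure"  \<comment> \<open>p(xt | x), on Xt\<close>
    and X Xt :: "(real^'x) set"
    and f :: "real^'x \<Rightarrow> real^'z"            \<comment> \<open>encoder\<close>
    and h :: "real^'z \<Rightarrow> real^'z"            \<comment> \<open>aligner\<close>
    and g :: "real^'z \<Rightarrow> real^'x"            \<comment> \<open>decoder\<close>
    and \<xi> :: "real^'x \<Rightarrow> real^'x \<Rightarrow> 'x \<Rightarrow> real^'z"
    and L_RC L_CL L_reg lam_max lam_min :: real
  assumes M: "prob_space M" "space M = X"
    and K: "\<And>x. x \<in> X \<Longrightarrow> prob_space (K x) \<and> space (K x) = Xt"
    and g_diff: "\<And>z. g differentiable (at z)"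
    and g_C1: "continuous_on UNIV (\<lambda>z. jacobian g (at z))"
    and \<xi>_mvt: "\<And>x xt j. x \<in> X \<Longrightarrow> xt \<in> Xt \<Longrightarrow>
        \<xi> x xt j \<in> closed_segment (f x) (h (f xt)) \<and>
        g (f x) $ j - g (h (f xt)) $ j = (jacobian g (at (\<xi> x xt j)) $ j) \<bullet> (f x - h (f xt))"
    and int_RC_in: "\<And>x. x \<in> X \<Longrightarrow> integrable (K x) (\<lambda>xt. norm (g (h (f xt)) - x))"
    and int_RC: "integrable M (\<lambda>x. \<integral>xt. norm (g (h (f xt)) - x) \<partial>K x)"
    and int_CL_in: "\<And>x. x \<in> X \<Longrightarrow> integrable (K x) (\<lambda>xt. norm (h (f xt) - f x))"
    and int_CL: "integrable M (\<lambda>x. \<integral>xt. norm (h (f xt) - f x) \<partial>K x)"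
    and int_reg: "integrable M (\<lambda>x. norm (g (f x) - x))"
    and L_RC_def: "L_RC = (\<integral>x. (\<integral>xt. norm (g (h (f xt)) - x) \<partial>K x) \<partial>M)"
    and L_CL_def: "L_CL = (\<integral>x. (\<integral>xt. norm (h (f xt) - f x) \<partial>K x) \<partial>M)"
    and L_reg_def: "L_reg = (\<integral>x. norm (g (f x) - x) \<partial>M)"
    and bdd: "bdd_above {lam_hat_max g \<xi> x xt | x xt. x \<in> X \<and> xt \<in> Xt}"
    and lam_max_def: "lam_max = (SUP p \<in> X \<times> Xt. lam_hat_max g \<xi> (fst p) (snd p))"
    and lam_min_def: "lam_min = (INF p \<in> X \<times> Xt. lam_hat_min g \<xi> (fst p) (snd p))"
    and nz: "lam_max \<noteq> 0" "lam_min \<noteq> 0"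
  shows "L_CL + (1 / lam_max) * L_reg \<ge> (1 / lam_max) * L_RC
         \<and> L_RC + L_reg \<ge> lam_min * L_CL"
proof -
  \<comment> \<open>\<open>g_diff\<close> and \<open>g_C1\<close> only justify the existence of \<open>\<xi>\<close>; the proof uses \<open>\<xi>_mvt\<close> directly.\<close>
  interpret prob_space M
    by (rule M(1))
  obtain x0 xt0 where x0: "x0 \<in> X" and xt0: "xt0 \<in> Xt"
    using not_empty M(2) K prob_space.not_empty by blast
  note lam_hat_max_le = lam_hat_max_le_SUP[OF bdd, folded lam_max_def]
  note lam_min_le = INF_le_lam_hat_min[of _ X _ Xt g \<xi>, folded lam_min_def]
  have "0 < lam_max"
    using order_trans[OF lam_hat_max_nonneg lam_hat_max_le[OF x0 xt0]] nz(1) by simp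
  have pointwise:
    "1 * norm (g (h (f xt)) - x) \<le> lam_max * norm (h (f xt) - f x) + norm (g (f x) - x)"
    "lam_min * norm (h (f xt) - f x) \<le> 1 * norm (g (h (f xt)) - x) + norm (g (f x) - x)"
    if "x \<in> space M" "xt \<in> space (K x)" for x xt
  proof -
    have x: "x \<in> X" "xt \<in> Xt"
      using that M(2) K by auto
    note mvt = conjunct2[OF \<xi>_mvt[OF x]]
    show "1 * norm (g (h (f xt)) - x) \<le> lam_max * norm (h (f xt) - f x) + norm (g (f x) - x)"
      using norm_diff_le_lam_hat_max_triangle[of g "f x" "h (f xt)" \<xi> x xt,
          OF mvt lam_hat_max_le[OF x]] by simp
    show "lam_min * norm (h (f xt) - f x) \<le> 1 * norm (g (h (f xt)) - x) + norm (g (f x) - x)"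
      using lam_hat_min_le_norm_diff_triangle[of g "f x" "h (f xt)" \<xi> x xt,
          OF mvt lam_min_le[OF x]] by simp
  qed
  have "1 * L_RC \<le> lam_max * L_CL + L_reg" "lam_min * L_CL \<le> 1 * L_RC + L_reg"
    unfolding L_RC_def L_CL_def L_reg_def
    using K M(2) int_RC_in int_RC int_CL_in int_CL int_reg pointwise
    by (intro nested_integral_affine_mono; auto)+
  with \<open>0 < lam_max\<close> show ?thesis
    by (auto simp: field_simps)
qed

end
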